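(* Let $d$ be a prime, $m,n,f$ nonnegative integers with $2f<n$, and let $X,Y$ be disjoint sets with $|X|=m$, $|Y|=n$. Let $\Gamma$ be a random symmetric $(n+m)\times(n+m)$ matrix indexed by $X\cup Y$ with entries in $\mathbb{Z}_d$, such that $\Gamma_{kk}=0$ for all $k$ and the entries $\Gamma_{kj}$ with $k>j$ (for some fixed ordering) are independent and uniformly distributed in $\mathbb{Z}_d$. Let $P$ be the probability that the corresponding graph code $V_\Gamma$ does not correct $f$ errors. Then $$\frac1n\log_2P\le\Bigl(\frac mn+\frac{4f}n-1\Bigr)\log_2d+H_2\Bigl(\frac{2f}n\Bigr),$$ where $H_2(r)=-r\log_2r-(1-r)\log_2(1-r)$.
   Context: For each $x\in X\cup Y$ let $\mathcal{H}_x\cong\mathbb{C}^d$ with orthonormal basis $|j\rangle$, $j\in\mathbb{Z}_d$; $\mathcal{H}_W=\bigotimes_{x\in W}\mathcal{H}_x$ with product basis $|j_W\rangle$. The graph code $V_\Gamma:\mathcal{H}_X\to\mathcal{H}_Y$ is defined by $\langle j_Y|V_\Gamma|j_X\rangle=d^{-n/2}\exp\bigl(\frac{i\pi}{d}\sum_{x,y\in X\cup Y}j_x\Gamma_{xy}j_y\bigr)$. Identify $\mathcal{H}_Y$ with $(\mathbb{C}^d)^{\otimes n}$ and let $\mathcal{E}_f$ be the linear span of all operators $A_1\otimes\cdots\otimes A_n$ with $A_i\neq\mathbb{1}$ for at most $f$ indices. $V_\Gamma$ corrects $f$ errors if for all $F_1,F_2\in\mathcal{E}_f$ there is a number $\omega(F_1^*F_2)$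 with $\langle V_\Gamma\phi_1,F_1^*F_2V_\Gamma\phi_2\rangle=\langle\phi_1,\phi_2\rangle\,\omega(F_1^*F_2)$ for all $\phi_1,\phi_2\in\mathcal{H}_X$. *)

theory Defs
  imports "HOL-Probability.Probability"
begin

text \<open>Basis configurations of H_W: functions W to {0..<d} (Z_d), extensional outside W.\<close>
definition confs :: "'a set \<Rightarrow> nat \<Rightarrow> ('a \<Rightarrow> nat) set" where
  "confs W d = (W \<rightarrow>\<^sub>E {0..<d})"

definition adj_mats :: "nat \<Rightarrow> 'a set \<Rightarrow> ('a \<Rightarrow> 'a \<Rightarrow> nat) set" where
  "adj_mats d Z = {G. (\<forall>k l. G k l < d) \<and> (\<forall>k l. G k l = G l k) \<and> (\<forall>k. G k k = 0)
                     \<and> (\<forall>k l. k \<notin> Z \<or> l \<notin> Z \<longrightarrow> G k l = 0)}"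

text \<open>Matrix entry <j_Y| V_Gamma |j_X>.\<close>
definition graph_code :: "nat \<Rightarrow> 'a set \<Rightarrow> 'a set \<Rightarrow> ('a \<Rightarrow> 'a \<Rightarrow> nat)
    \<Rightarrow> ('a \<Rightarrow> nat) \<Rightarrow> ('a \<Rightarrow> nat) \<Rightarrow> complex" where
  "graph_code d X Y G jY jX =
     (let j = (\<lambda>x. if x \<in> X then jX x else jY x) in
      complex_of_real (1 / sqrt (real d) ^ card Y) *
      exp (\<i> * complex_of_real (pi / real d) *
           of_nat (\<Sum>x\<in>X \<union> Y. \<Sum>y\<in>X \<union> Y. j x * G x y * j y)))"

definition apply_code :: "nat \<Rightarrow> 'a set \<Rightarrow> 'a set \<Rightarrow> ('a \<Rightarrow> 'a \<Rightarrow> nat)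
    \<Rightarrow> (('a \<Rightarrow> nat) \<Rightarrow> complex) \<Rightarrow> ('a \<Rightarrow> nat) \<Rightarrow> complex" where
  "apply_code d X Y G \<phi> jY = (\<Sum>jX\<in>confs X d. graph_code d X Y G jY jX * \<phi> jX)"

definition hinner :: "'a set \<Rightarrow> nat \<Rightarrow> (('a \<Rightarrow> nat) \<Rightarrow> complex)
    \<Rightarrow> (('a \<Rightarrow> nat) \<Rightarrow> complex) \<Rightarrow> complex" where
  "hinner W d u v = (\<Sum>j\<in>confs W d. cnj (u j) * v j)"

text \<open>Operators on H_Y as matrices F j k = <j|F|k>; adjoint, product, application.\<close>
definition op_adj :: "(('a \<Rightarrow> nat) \<Rightarrow> ('a \<Rightarrow> nat) \<Rightarrow> complex)
    \<Rightarrow> ('a \<Rightarrow> nat) \<Rightarrow> ('a \<Rightarrow> nat) \<Rightarrow> complex" where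
  "op_adj F j k = cnj (F k j)"

definition op_mult :: "'a set \<Rightarrow> nat \<Rightarrow> (('a \<Rightarrow> nat) \<Rightarrow> ('a \<Rightarrow> nat) \<Rightarrow> complex)
    \<Rightarrow> (('a \<Rightarrow> nat) \<Rightarrow> ('a \<Rightarrow> nat) \<Rightarrow> complex)
    \<Rightarrow> ('a \<Rightarrow> nat) \<Rightarrow> ('a \<Rightarrow> nat) \<Rightarrow> complex" where
  "op_mult W d F G j k = (\<Sum>l\<in>confs W d. F j l * G l k)"

definition op_apply :: "'a set \<Rightarrow> nat \<Rightarrow> (('a \<Rightarrow> nat) \<Rightarrow> ('a \<Rightarrow> nat) \<Rightarrow> complex)
    \<Rightarrow> (('a \<Rightarrow> nat) \<Rightarrow> complex) \<Rightarrow> ('a \<Rightarrow> nat) \<Rightarrow> complex" where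
  "op_apply W d F v j = (\<Sum>k\<in>confs W d. F j k * v k)"

definition non_identity :: "nat \<Rightarrow> (nat \<Rightarrow> nat \<Rightarrow> complex) \<Rightarrow> bool" where
  "non_identity d A = (\<exists>a<d. \<exists>b<d. A a b \<noteq> (if a = b then 1 else 0))"

definition tensor_op :: "'a set \<Rightarrow> ('a \<Rightarrow> nat \<Rightarrow> nat \<Rightarrow> complex)
    \<Rightarrow> ('a \<Rightarrow> nat) \<Rightarrow> ('a \<Rightarrow> nat) \<Rightarrow> complex" where
  "tensor_op Y A j k = (\<Prod>y\<in>Y. A y (j y) (k y))"

definition error_space :: "nat \<Rightarrow> 'a set \<Rightarrow> nat
    \<Rightarrow> (('a \<Rightarrow> nat) \<Rightarrow> ('a \<Rightarrow> nat) \<Rightarrow> complex) set" where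
  "error_space d Y f = {F. \<exists>(N::nat) (c::nat \<Rightarrow> complex) A.
      (\<forall>i<N. card {y\<in>Y. non_identity d (A i y)} \<le> f) \<and>
      F = (\<lambda>j k. \<Sum>i<N. c i * tensor_op Y (A i) j k)}"

definition corrects :: "nat \<Rightarrow> 'a set \<Rightarrow> 'a set \<Rightarrow> ('a \<Rightarrow> 'a \<Rightarrow> nat) \<Rightarrow> nat \<Rightarrow> bool" where
  "corrects d X Y G f = (\<forall>F1\<in>error_space d Y f. \<forall>F2\<in>error_space d Y f. \<exists>\<omega>::complex.
     \<forall>\<phi>1 \<phi>2. hinner Y d (apply_code d X Y G \<phi>1)
                 (op_apply Y d (op_mult Y d (op_adj F1) F2) (apply_code d X Y G \<phi>2))
               = hinner X d \<phi>1 \<phi>2 * \<omega>)"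

definition H2 :: "real \<Rightarrow> real" where
  "H2 r = - r * log 2 r - (1 - r) * log 2 (1 - r)"

end

theory Submission
  imports Defs "HOL-Number_Theory.Cong"
begin

text \<open>
  The code \<open>V\<^sub>\<Gamma>\<close> corrects \<open>f\<close> errors as soon as every set \<open>S\<close> of \<open>2f\<close> outputs is
  detectable: no nonzero configuration \<open>v\<close> of \<open>X \<union> S\<close> has all syndromes
  \<open>\<Sum>\<^sub>t \<Gamma>\<^sub>r\<^sub>t v\<^sub>t\<close>, \<open>r \<in> Y - S\<close>, divisible by \<open>d\<close>. Indeed, for an elementary error acting
  trivially outside \<open>S\<close>, the sum of the phases of \<open>V\<^sub>\<Gamma>\<close> over the configurations of \<open>Y - S\<close>
  is a product of character sums of \<open>\<int>\<^sub>d\<close>; it vanishes unless the inputs and the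
  configurations on \<open>S\<close> agree, so \<open>V\<^sup>* E V\<close> is scalar, and by linearity this holds on all
  of \<open>E\<^sub>f\<^sup>* E\<^sub>f\<close>.

  For a uniformly random \<open>\<Gamma>\<close> and a fixed nonzero \<open>v\<close>, the syndrome vector is uniform on
  \<open>\<int>\<^sub>d\<^bsup>Y - S\<^esup>\<close>: adding a vector to the column of a site where \<open>v\<close> is a unit mod \<open>d\<close>
  permutes its fibres. So each of the at most \<open>C(n,2f) d\<^bsup>m+2f\<^esup>\<close> pairs \<open>(S, v)\<close> is bad with
  probability \<open>d\<^bsup>-(n-2f)\<^esup>\<close>, and the union bound together with
  \<open>log\<^sub>2 C(n,k) \<le> n H\<^sub>2(k/n)\<close> gives the claim.
\<close>

section \<open>Binomial coefficients and binary entropy\<close>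

lemma log_binomial_le_entropy:
  fixes n k :: nat
  assumes "k < n"
  shows "log 2 (real (n choose k)) \<le> real n * H2 (real k / real n)"
proof (cases "k = 0")
  case True
  then show ?thesis by (simp add: H2_def)
next
  case False
  define p where "p = real k / real n"
  have p: "0 < p" "p < 1" using assms False by (auto simp: p_def)
  have binom_pos: "real (n choose k) > 0" using assms by simp
  have "real (n choose k) * p ^ k * (1 - p) ^ (n - k)
        \<le> (\<Sum>i\<le>n. real (n choose i) * p ^ i * (1 - p) ^ (n - i))"
    by (rule member_le_sum) (use assms p in auto)
  also have "\<dots> = (p + (1 - p)) ^ n"
    by (simp only: binomial_ring)
  finally have "real (n choose k) * p ^ k * (1 - p) ^ (n - k) \<le> 1"
    by simp
  then have "log 2 (real (n choose k) * p ^ k * (1 - p) ^ (n - k)) \<le> 0"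
    using binom_pos p by (subst log_le_zero_cancel_iff) auto
  then have "log 2 (real (n choose k)) + real k * log 2 p + real (n - k) * log 2 (1 - p) \<le> 0"
    using binom_pos p by (simp add: log_mult log_nat_power)
  moreover have "real n * H2 p = - real k * log 2 p - real (n - k) * log 2 (1 - p)"
    using assms by (simp add: H2_def p_def field_simps of_nat_diff)
  ultimately show ?thesis
    unfolding p_def by linarith
qed

lemma log_le_binomial_bound:
  fixes n k m d :: nat and P :: real
  assumes "k < n" and "1 < d" and "0 < P"
    and "P \<le> real (n choose k) * real d ^ (m + k) / real d ^ (n - k)"
  shows "log 2 P / real n
         \<le> (real m / real n + 2 * real k / real n - 1) * log 2 (real d) + H2 (real k / real n)"
proof -
  have binom_pos: "real (n choose k) > 0" using assms(1) by simp
  have "log 2 P \<le> log 2 (real (n choose k) * real d ^ (m + k) / real d ^ (n - k))"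
    using assms(3,4) by simp
  also have "\<dots> = log 2 (real (n choose k)) + (real m + 2 * real k - real n) * log 2 (real d)"
    using binom_pos assms(1,2)
    by (simp add: log_mult log_divide log_nat_power of_nat_diff algebra_simps)
  also have "\<dots> \<le> real n * H2 (real k / real n) + (real m + 2 * real k - real n) * log 2 (real d)"
    using log_binomial_le_entropy[OF assms(1)] by simp
  finally show ?thesis
    using assms(1) by (simp add: field_simps)
qed

section \<open>Counting symmetric matrices by syndrome\<close>

definition syndrome :: "('a \<Rightarrow> 'a \<Rightarrow> nat) \<Rightarrow> 'a set \<Rightarrow> ('a \<Rightarrow> nat) \<Rightarrow> 'a \<Rightarrow> nat" where
  "syndrome G T v r = (\<Sum>t\<in>T. G r t * v t)"

definition detectable :: "nat \<Rightarrow> 'a set \<Rightarrow> 'a set \<Rightarrow> ('a \<Rightarrow> 'a \<Rightarrow> nat) \<Rightarrow> 'a set \<Rightarrow> bool" where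
  "detectable d X Y G S \<longleftrightarrow>
     (\<forall>v\<in>confs (X \<union> S) d. (\<forall>r\<in>Y - S. d dvd syndrome G (X \<union> S) v r) \<longrightarrow> (\<forall>t\<in>X \<union> S. v t = 0))"

lemma finite_confs: "finite W \<Longrightarrow> finite (confs W d)"
  unfolding confs_def by (rule finite_PiE) auto

lemma card_confs: "finite W \<Longrightarrow> card (confs W d) = d ^ card W"
  unfolding confs_def by (simp add: card_PiE)

lemma finite_adj_mats:
  assumes "finite Z"
  shows "finite (adj_mats d Z)"
proof -
  let ?mat = "\<lambda>h k l. if k \<in> Z \<and> l \<in> Z then h (k, l) else 0"
  have "G = ?mat (restrict (case_prod G) (Z \<times> Z))" if "G \<in> adj_mats d Z" for G
    using that by (auto simp: adj_mats_def fun_eq_iff)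
  moreover have "restrict (case_prod G) (Z \<times> Z) \<in> (Z \<times> Z) \<rightarrow>\<^sub>E {0..<d}" if "G \<in> adj_mats d Z" for G
    using that by (auto simp: adj_mats_def)
  ultimately have "adj_mats d Z \<subseteq> ?mat ` ((Z \<times> Z) \<rightarrow>\<^sub>E {0..<d})"
    by blast
  then show ?thesis
    by (rule finite_subset) (use assms in \<open>auto intro!: finite_PiE\<close>)
qed

lemma card_eq_card_mult_card_fibre:
  assumes "finite A" and "finite C" and "f ` A \<subseteq> C" and "c\<^sub>0 \<in> C"
    and into_fibre: "\<And>c c'. c \<in> C \<Longrightarrow> c' \<in> C \<Longrightarrow>
      \<exists>h. inj_on h {x\<in>A. f x = c} \<and> h ` {x\<in>A. f x = c} \<subseteq> {x\<in>A. f x = c'}"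
  shows "card A = card C * card {x\<in>A. f x = c\<^sub>0}"
proof -
  have le: "card {x\<in>A. f x = c} \<le> card {x\<in>A. f x = c'}" if cc': "c \<in> C" "c' \<in> C" for c c'
  proof -
    obtain h where "inj_on h {x\<in>A. f x = c}" "h ` {x\<in>A. f x = c} \<subseteq> {x\<in>A. f x = c'}"
      using into_fibre[OF cc'] by blast
    then show ?thesis
      using assms(1) by (intro card_inj_on_le) auto
  qed
  have "card A = card (\<Union>c\<in>C. {x\<in>A. f x = c})"
    using assms(3) by (intro arg_cong[where f = card]) auto
  also have "\<dots> = (\<Sum>c\<in>C. card {x\<in>A. f x = c})"
    using assms(1,2) by (intro card_UN_disjoint) auto
  also have "\<dots> = (\<Sum>c\<in>C. card {x\<in>A. f x = c\<^sub>0})"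
    using le assms(4) by (intro sum.cong refl antisym)
  also have "\<dots> = card C * card {x\<in>A. f x = c\<^sub>0}"
    by simp
  finally show ?thesis .
qed

lemma prime_linear_cong_solvable:
  fixes d w s t :: nat
  assumes "prime d" and "\<not> d dvd w"
  obtains e where "[s + e * w = t] (mod d)"
proof -
  have "coprime w d"
    using assms by (simp add: prime_imp_coprime coprime_commute)
  then obtain x where x: "[w * x = 1] (mod d)"
    using cong_solve_coprime_nat by auto
  \<comment> \<open>\<open>x\<close> inverts \<open>w\<close>, and \<open>(d - 1) * s\<close> cancels \<open>s\<close> mod \<open>d\<close>\<close>
  define c where "c = t + (d - 1) * s"
  have "[w * x * c = 1 * c] (mod d)"
    using x by (rule cong_scalar_right)
  then have "[s + x * c * w = s + 1 * c] (mod d)"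
    by (intro cong_add) (auto simp: mult_ac)
  also have "s + 1 * c = t + d * s"
    using prime_gt_0_nat[OF assms(1)] by (cases d) (auto simp: c_def)
  also have "[t + d * s = t] (mod d)"
    by (simp add: cong_def)
  finally show ?thesis
    by (rule that)
qed

definition shift_column ::
    "nat \<Rightarrow> 'a set \<Rightarrow> 'a \<Rightarrow> ('a \<Rightarrow> nat) \<Rightarrow> ('a \<Rightarrow> 'a \<Rightarrow> nat) \<Rightarrow> 'a \<Rightarrow> 'a \<Rightarrow> nat" where
  "shift_column d R z e G k l =
     (if k \<in> R \<and> l = z then (G k l + e k) mod d
      else if l \<in> R \<and> k = z then (G k l + e l) mod d
      else G k l)"

lemma shift_column_in_adj_mats:
  assumes "G \<in> adj_mats d Z" and "R \<subseteq> Z" and "z \<in> Z - R" and "d > 0"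
  shows "shift_column d R z e G \<in> adj_mats d Z"
  using assms unfolding adj_mats_def shift_column_def by (auto simp: add.commute)

lemma inj_on_shift_column: "inj_on (shift_column d R z e) (adj_mats d Z)"
proof (rule inj_onI, rule ext, rule ext)
  fix G H k l
  assume G: "G \<in> adj_mats d Z" and H: "H \<in> adj_mats d Z"
    and eq: "shift_column d R z e G = shift_column d R z e H"
  have "G k l < d" "H k l < d"
    using G H by (auto simp: adj_mats_def)
  moreover have "[G k l + c = H k l + c] (mod d) \<Longrightarrow> G k l = H k l" for c
    using calculation by (simp add: cong_add_rcancel_nat cong_less_modulus_unique_nat)
  ultimately show "G k l = H k l"
    using fun_cong[OF fun_cong[OF eq, of k], of l]
    unfolding shift_column_def cong_def by (auto split: if_splits)
qed

lemma syndrome_shift_column: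
  assumes "finite T" and "z \<in> T" and "r \<in> R" and "T \<inter> R = {}"
  shows "[syndrome (shift_column d R z e G) T v r = syndrome G T v r + e r * v z] (mod d)"
proof -
  have rest: "(\<Sum>t\<in>T - {z}. shift_column d R z e G r t * v t) = (\<Sum>t\<in>T - {z}. G r t * v t)"
    using assms by (intro sum.cong) (auto simp: shift_column_def)
  have "[syndrome (shift_column d R z e G) T v r
         = (G r z + e r) mod d * v z + (\<Sum>t\<in>T - {z}. G r t * v t)] (mod d)"
    using assms rest by (simp add: syndrome_def sum.remove shift_column_def)
  also have "[(G r z + e r) mod d * v z + (\<Sum>t\<in>T - {z}. G r t * v t)
              = (G r z + e r) * v z + (\<Sum>t\<in>T - {z}. G r t * v t)] (mod d)"
    by (intro cong_add cong_mult) (auto simp: cong_def)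
  also have "(G r z + e r) * v z + (\<Sum>t\<in>T - {z}. G r t * v t) = syndrome G T v r + e r * v z"
    using assms by (simp add: syndrome_def sum.remove algebra_simps)
  finally show ?thesis .
qed

lemma syndrome_mod_shift_column:
  assumes "finite T" and "z \<in> T" and "T \<inter> R = {}"
    and "restrict (\<lambda>r. syndrome G T v r mod d) R = c"
    and "\<forall>r\<in>R. [c r + e r * v z = c' r] (mod d)" and "c' \<in> R \<rightarrow>\<^sub>E {0..<d}"
  shows "restrict (\<lambda>r. syndrome (shift_column d R z e G) T v r mod d) R = c'"
proof
  fix r
  show "restrict (\<lambda>r. syndrome (shift_column d R z e G) T v r mod d) R r = c' r"
  proof (cases "r \<in> R")
    case True
    have "[syndrome (shift_column d R z e G) T v r = syndrome G T v r + e r * v z] (mod d)"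
      by (rule syndrome_shift_column[OF assms(1,2) True assms(3)])
    also have "[syndrome G T v r + e r * v z = c r + e r * v z] (mod d)"
      using assms(4) True by (intro cong_add) (auto simp: cong_def)
    also have "[c r + e r * v z = c' r] (mod d)"
      using assms(5) True by blast
    finally show ?thesis
      using True assms(6) by (auto simp: cong_def PiE_iff)
  qed (use assms(6) in auto)
qed

lemma card_syndrome_zero:
  assumes "prime d" and "finite Z" and "T \<subseteq> Z" and "R \<subseteq> Z" and "T \<inter> R = {}"
    and "finite T" and "z \<in> T" and "0 < v z" and "v z < d"
  shows "card {G \<in> adj_mats d Z. \<forall>r\<in>R. d dvd syndrome G T v r} * d ^ card R = card (adj_mats d Z)"
proof -
  have d: "d > 0"
    using assms(1) prime_gt_0_nat by blast
  have "\<not> d dvd v z"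
    using assms(8,9) by (auto dest: dvd_imp_le)
  then have "\<exists>e. [s + e * v z = t] (mod d)" for s t
    by (metis assms(1) prime_linear_cong_solvable)
  then have solvable: "\<exists>e. \<forall>r. [c r + e r * v z = c' r] (mod d)" for c c' :: "'a \<Rightarrow> nat"
    by (intro choice) blast
  define C where "C = R \<rightarrow>\<^sub>E {0..<d}"
  define syn where "syn G = restrict (\<lambda>r. syndrome G T v r mod d) R" for G
  \<comment> \<open>shifting column \<open>z\<close>, where \<open>v\<close> is a unit mod \<open>d\<close>, maps each fibre of \<open>syn\<close> into any other\<close>
  have "card (adj_mats d Z) = card C * card {G \<in> adj_mats d Z. syn G = restrict (\<lambda>_. 0) R}"
  proof (rule card_eq_card_mult_card_fibre)
    show "finite (adj_mats d Z)"
      using assms(2) by (rule finite_adj_mats)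
    show "finite C"
      using finite_subset[OF assms(4,2)] by (simp add: C_def finite_PiE)
    show "syn ` adj_mats d Z \<subseteq> C" "restrict (\<lambda>_. 0) R \<in> C"
      using d by (auto simp: syn_def C_def)
  next
    fix c c' assume "c' \<in> C"
    obtain e where "\<forall>r. [c r + e r * v z = c' r] (mod d)"
      using solvable by blast
    then have "syn (shift_column d R z e G) = c'" if "syn G = c" for G
      using syndrome_mod_shift_column[OF assms(6,7,5)] \<open>c' \<in> C\<close> that by (simp add: syn_def C_def)
    moreover have "shift_column d R z e G \<in> adj_mats d Z" if "G \<in> adj_mats d Z" for G
      using that assms(3-5,7) d by (intro shift_column_in_adj_mats) auto
    ultimately show "\<exists>h. inj_on h {G \<in> adj_mats d Z. syn G = c}
        \<and> h ` {G \<in> adj_mats d Z. syn G = c} \<subseteq> {G \<in> adj_mats d Z. syn G = c'}"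
      by (intro exI[of _ "shift_column d R z e"] conjI inj_on_subset[OF inj_on_shift_column]) auto
  qed
  moreover have "{G \<in> adj_mats d Z. syn G = restrict (\<lambda>_. 0) R}
      = {G \<in> adj_mats d Z. \<forall>r\<in>R. d dvd syndrome G T v r}"
    by (auto simp: syn_def fun_eq_iff dvd_eq_mod_eq_0)
  moreover have "card C = d ^ card R"
    using finite_subset[OF assms(4,2)] by (simp add: C_def card_PiE)
  ultimately show ?thesis
    by simp
qed

lemma card_not_detectable_le:
  assumes "prime d" and "finite X" and "finite Y" and "X \<inter> Y = {}" and "S \<subseteq> Y"
  shows "card {G \<in> adj_mats d (X \<union> Y). \<not> detectable d X Y G S} * d ^ (card Y - card S)
         \<le> d ^ (card X + card S) * card (adj_mats d (X \<union> Y))"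
proof -
  define A where "A = adj_mats d (X \<union> Y)"
  define T where "T = X \<union> S"
  define nonzero where "nonzero = {v \<in> confs T d. \<exists>t\<in>T. v t \<noteq> 0}"
  define kernel where "kernel v = {G \<in> A. \<forall>r\<in>Y - S. d dvd syndrome G T v r}" for v
  have fin: "finite S" "finite T" "finite A"
    using assms finite_subset by (auto simp: T_def A_def finite_adj_mats)
  have kernel_card: "card (kernel v) * d ^ card (Y - S) = card A" if v: "v \<in> nonzero" for v
  proof -
    obtain z where "z \<in> T" "v z \<noteq> 0"
      using v by (auto simp: nonzero_def)
    moreover have "v z < d"
      using v \<open>z \<in> T\<close> by (auto simp: nonzero_def confs_def)
    ultimately
    show ?thesis
      unfolding kernel_def A_def using assms fin
      by (intro card_syndrome_zero) (auto simp: T_def)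
  qed
  have "card {G \<in> A. \<not> detectable d X Y G S} \<le> card (\<Union>v\<in>nonzero. kernel v)"
    using fin by (intro card_mono)
      (auto simp: detectable_def nonzero_def kernel_def T_def intro: finite_subset)
  also have "\<dots> \<le> (\<Sum>v\<in>nonzero. card (kernel v))"
    using fin by (intro card_UN_le) (simp add: nonzero_def finite_confs)
  finally have "card {G \<in> A. \<not> detectable d X Y G S} * d ^ card (Y - S)
      \<le> (\<Sum>v\<in>nonzero. card (kernel v) * d ^ card (Y - S))"
    unfolding sum_distrib_right[symmetric] by (rule mult_le_mono1)
  also have "\<dots> = card nonzero * card A"
    using kernel_card by simp
  also have "\<dots> \<le> d ^ card T * card A"
    using fin by (intro mult_right_mono)
      (auto simp: nonzero_def finite_confs card_confs[symmetric] intro: card_mono)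
  also have "card T = card X + card S"
    unfolding T_def using assms fin by (intro card_Un_disjoint) auto
  finally show ?thesis
    using assms fin by (simp add: A_def card_Diff_subset)
qed

lemma card_some_not_detectable_le:
  assumes "prime d" and "finite X" and "finite Y" and "X \<inter> Y = {}"
  shows "card {G \<in> adj_mats d (X \<union> Y). \<exists>S\<subseteq>Y. card S = k \<and> \<not> detectable d X Y G S} * d ^ (card Y - k)
         \<le> (card Y choose k) * d ^ (card X + k) * card (adj_mats d (X \<union> Y))"
proof -
  define A where "A = adj_mats d (X \<union> Y)"
  define subsets where "subsets = {S. S \<subseteq> Y \<and> card S = k}"
  define bad where "bad S = {G \<in> A. \<not> detectable d X Y G S}" for S
  have fin: "finite subsets" "finite A"
    using assms by (auto simp: subsets_def A_def finite_adj_mats)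
  have "card {G \<in> A. \<exists>S\<subseteq>Y. card S = k \<and> \<not> detectable d X Y G S} \<le> card (\<Union>S\<in>subsets. bad S)"
    using fin by (intro card_mono) (auto simp: subsets_def bad_def)
  also have "\<dots> \<le> (\<Sum>S\<in>subsets. card (bad S))"
    using fin by (intro card_UN_le) (simp add: bad_def)
  finally have "card {G \<in> A. \<exists>S\<subseteq>Y. card S = k \<and> \<not> detectable d X Y G S} * d ^ (card Y - k)
      \<le> (\<Sum>S\<in>subsets. card (bad S) * d ^ (card Y - k))"
    unfolding sum_distrib_right[symmetric] by (rule mult_le_mono1)
  also have "\<dots> \<le> (\<Sum>S\<in>subsets. d ^ (card X + k) * card A)"
    using card_not_detectable_le[OF assms]
    by (intro sum_mono) (auto simp: subsets_def bad_def A_def)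
  also have "\<dots> = (card Y choose k) * d ^ (card X + k) * card A"
    using assms(3) by (simp add: subsets_def n_subsets)
  finally show ?thesis
    by (simp add: A_def)
qed

section \<open>Matrix elements of the graph code\<close>

definition join_conf :: "'a set \<Rightarrow> ('a \<Rightarrow> nat) \<Rightarrow> ('a \<Rightarrow> nat) \<Rightarrow> 'a \<Rightarrow> nat" where
  "join_conf S a k = (\<lambda>x. if x \<in> S then a x else k x)"

lemma join_conf_in_confs:
  "S \<subseteq> Y \<Longrightarrow> a \<in> confs S d \<Longrightarrow> k \<in> confs (Y - S) d \<Longrightarrow> join_conf S a k \<in> confs Y d"
  unfolding confs_def join_conf_def by (auto simp: PiE_iff extensional_def)

lemma sum_confs_split:
  assumes "S \<subseteq> Y"
  shows "(\<Sum>y\<in>confs Y d. h y) = (\<Sum>a\<in>confs S d. \<Sum>k\<in>confs (Y - S) d. h (join_conf S a k))"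
proof -
  have "(\<Sum>y\<in>confs Y d. h y) = (\<Sum>(a, k)\<in>confs S d \<times> confs (Y - S) d. h (join_conf S a k))"
  proof (rule sum.reindex_bij_witness[where i = "\<lambda>(a, k). join_conf S a k"
                                        and j = "\<lambda>y. (restrict y S, restrict y (Y - S))"])
    fix y assume y: "y \<in> confs Y d"
    then show "(restrict y S, restrict y (Y - S)) \<in> confs S d \<times> confs (Y - S) d"
      using assms by (auto simp: confs_def)
    have "join_conf S (restrict y S) (restrict y (Y - S)) = y"
      using y assms by (auto simp: confs_def join_conf_def PiE_iff extensional_def)
    then show "(case (restrict y S, restrict y (Y - S)) of (a, k) \<Rightarrow> join_conf S a k) = y"
      and "(case (restrict y S, restrict y (Y - S)) of (a, k) \<Rightarrow> h (join_conf S a k)) = h y"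
      by simp_all
  next
    fix p assume "p \<in> confs S d \<times> confs (Y - S) d"
    then show "(case p of (a, k) \<Rightarrow> join_conf S a k) \<in> confs Y d"
      and "(restrict (case p of (a, k) \<Rightarrow> join_conf S a k) S,
            restrict (case p of (a, k) \<Rightarrow> join_conf S a k) (Y - S)) = p"
      using assms join_conf_in_confs
      by (auto simp: confs_def join_conf_def PiE_iff extensional_def fun_eq_iff)
  qed
  then show ?thesis
    by (simp add: sum.cartesian_product)
qed

lemma sum_roots_of_unity_power:
  fixes d :: nat and D :: int
  assumes "d > 0"
  shows "(\<Sum>t\<in>{0..<d}. exp (2 * pi * \<i> * of_nat t * of_int D / of_nat d))
         = (if int d dvd D then of_nat d else (0::complex))"
proof -
  define \<omega> where "\<omega> = exp (2 * pi * \<i> * of_int D / of_nat d)"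
  have power: "exp (2 * pi * \<i> * of_nat t * of_int D / of_nat d) = \<omega> ^ t" for t
    unfolding \<omega>_def by (subst exp_of_nat_mult[symmetric]) (simp add: mult_ac)
  have "\<omega> = 1 \<longleftrightarrow> int d dvd D"
  proof
    assume "\<omega> = 1"
    then obtain n :: int where "2 * pi * of_int D / real d = of_int (2 * n) * pi"
      unfolding \<omega>_def exp_eq_1 by auto
    then have "real_of_int D = real_of_int (int d * n)"
      using assms by (simp add: field_simps)
    then show "int d dvd D"
      by (simp only: of_int_eq_iff) simp
  next
    assume "int d dvd D"
    then obtain q where "D = int d * q" ..
    then show "\<omega> = 1"
      using assms by (simp add: \<omega>_def exp_eq_1)
  qed
  moreover have "\<omega> ^ d = 1"
    using assms by (simp add: \<omega>_def exp_of_nat_mult[symmetric] exp_eq_1)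
  ultimately show ?thesis
    unfolding power by (auto simp: geometric_sum atLeast0LessThan)
qed

definition qform :: "('a \<Rightarrow> 'a \<Rightarrow> nat) \<Rightarrow> 'a set \<Rightarrow> ('a \<Rightarrow> nat) \<Rightarrow> nat" where
  "qform G T z = (\<Sum>x\<in>T. \<Sum>y\<in>T. z x * G x y * z y)"

lemma qform_cong: "(\<And>x. x \<in> T \<Longrightarrow> z x = z' x) \<Longrightarrow> qform G T z = qform G T z'"
  unfolding qform_def by (intro sum.cong refl) auto

lemma syndrome_cong: "(\<And>x. x \<in> T \<Longrightarrow> z x = z' x) \<Longrightarrow> syndrome G T z r = syndrome G T z' r"
  unfolding syndrome_def by (intro sum.cong refl) auto

lemma qform_Un:
  assumes "finite T" and "finite R" and "T \<inter> R = {}" and sym: "\<And>x y. G x y = G y x"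
  shows "qform G (T \<union> R) z = qform G T z + 2 * (\<Sum>r\<in>R. z r * syndrome G T z r) + qform G R z"
proof -
  have cross: "(\<Sum>x\<in>T. \<Sum>y\<in>R. z x * G x y * z y) = (\<Sum>r\<in>R. z r * syndrome G T z r)"
    "(\<Sum>x\<in>R. \<Sum>y\<in>T. z x * G x y * z y) = (\<Sum>r\<in>R. z r * syndrome G T z r)"
    by (subst sum.swap) (simp_all add: syndrome_def sum_distrib_left mult_ac sym)
  have "qform G (T \<union> R) z
      = (\<Sum>x\<in>T. \<Sum>y\<in>T \<union> R. z x * G x y * z y) + (\<Sum>x\<in>R. \<Sum>y\<in>T \<union> R. z x * G x y * z y)"
    unfolding qform_def using assms(1-3) by (rule sum.union_disjoint)
  also have "\<dots> = qform G T z + (\<Sum>x\<in>T. \<Sum>y\<in>R. z x * G x y * z y)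
       + ((\<Sum>x\<in>R. \<Sum>y\<in>T. z x * G x y * z y) + qform G R z)"
    unfolding qform_def using assms(1-3) by (simp add: sum.union_disjoint sum.distrib)
  finally show ?thesis
    unfolding cross by simp
qed

lemma graph_code_eq_qform:
  "graph_code d X Y G y j = complex_of_real (1 / sqrt (real d) ^ card Y) *
     exp (\<i> * complex_of_real (pi / real d) * of_nat (qform G (X \<union> Y) (join_conf X j y)))"
  unfolding graph_code_def qform_def join_conf_def Let_def ..

lemma graph_code_join_conf:
  assumes "finite X" and "finite Y" and "X \<inter> Y = {}" and "S \<subseteq> Y" and "\<And>x y. G x y = G y x"
  shows "graph_code d X Y G (join_conf S a k) j = complex_of_real (1 / sqrt (real d) ^ card Y) *
     exp (\<i> * complex_of_real (pi / real d) * of_nat (qform G (X \<union> S) (join_conf X j a)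
       + 2 * (\<Sum>r\<in>Y - S. k r * syndrome G (X \<union> S) (join_conf X j a) r) + qform G (Y - S) k))"
proof -
  define z where "z = join_conf X j (join_conf S a k)"
  have XY: "X \<union> Y = (X \<union> S) \<union> (Y - S)"
    using assms(4) by auto
  have "qform G (X \<union> Y) z
      = qform G (X \<union> S) z + 2 * (\<Sum>r\<in>Y - S. z r * syndrome G (X \<union> S) z r) + qform G (Y - S) z"
    unfolding XY using assms(1-5) by (intro qform_Un) (auto intro: finite_subset)
  also have "\<dots> = qform G (X \<union> S) (join_conf X j a)
      + 2 * (\<Sum>r\<in>Y - S. k r * syndrome G (X \<union> S) (join_conf X j a) r) + qform G (Y - S) k"
    using assms(3) by (auto simp: z_def join_conf_def disjoint_iff
        intro!: arg_cong2[where f = "(+)"] qform_cong syndrome_cong sum.cong)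
  finally show ?thesis
    by (simp only: graph_code_eq_qform z_def)
qed

lemma cnj_graph_code_mult:
  assumes "finite X" and "finite Y" and "X \<inter> Y = {}" and "S \<subseteq> Y" and "\<And>x y. G x y = G y x"
  shows "cnj (graph_code d X Y G (join_conf S a' k) j') * graph_code d X Y G (join_conf S a k) j
    = complex_of_real (1 / real d ^ card Y) * exp (\<i> * complex_of_real (pi / real d) *
        (of_nat (qform G (X \<union> S) (join_conf X j a)) - of_nat (qform G (X \<union> S) (join_conf X j' a'))))
      * (\<Prod>r\<in>Y - S. exp (2 * pi * \<i> * of_nat (k r)
          * of_int (int (syndrome G (X \<union> S) (join_conf X j a) r)
                    - int (syndrome G (X \<union> S) (join_conf X j' a') r)) / of_nat d))"
proof -
  define \<kappa> where "\<kappa> = 1 / sqrt (real d) ^ card Y"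
  have \<kappa>: "\<kappa> * \<kappa> = 1 / real d ^ card Y"
    by (simp add: \<kappa>_def flip: power_mult_distrib)
  define c where "c = \<i> * complex_of_real (pi / real d)"
  define E where "E j a = (of_nat (qform G (X \<union> S) (join_conf X j a))
      + 2 * (\<Sum>r\<in>Y - S. of_nat (k r) * of_nat (syndrome G (X \<union> S) (join_conf X j a) r))
      + of_nat (qform G (Y - S) k) :: complex)" for j a
  have code: "graph_code d X Y G (join_conf S a k) j = complex_of_real \<kappa> * exp (c * E j a)" for j a
    unfolding graph_code_join_conf[OF assms(1-5)] by (simp add: c_def E_def \<kappa>_def)
  have "cnj (E j' a') = E j' a'" "cnj c = - c"
    by (simp_all add: E_def c_def)
  then have "cnj (graph_code d X Y G (join_conf S a' k) j') * graph_code d X Y G (join_conf S a k) j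
      = complex_of_real (\<kappa> * \<kappa>) * exp (c * E j a - c * E j' a')"
    unfolding code by (simp add: exp_cnj exp_diff exp_minus field_simps)
  also have "c * E j a - c * E j' a'
      = c * (of_nat (qform G (X \<union> S) (join_conf X j a))
             - of_nat (qform G (X \<union> S) (join_conf X j' a')))
        + (\<Sum>r\<in>Y - S. 2 * pi * \<i> * of_nat (k r)
            * of_int (int (syndrome G (X \<union> S) (join_conf X j a) r)
                      - int (syndrome G (X \<union> S) (join_conf X j' a') r)) / of_nat d)"
    by (simp add: E_def c_def algebra_simps sum_distrib_left sum_subtractf diff_divide_distrib
        flip: sum_divide_distrib)
  finally show ?thesis
    using assms(2) by (simp add: exp_add exp_sum c_def \<kappa>)
qed

lemma sum_cnj_graph_code_mult:
  assumes "d > 0" and "finite X" and "finite Y" and "X \<inter> Y = {}" and "S \<subseteq> Y"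
    and "\<And>x y. G x y = G y x"
  shows "(\<Sum>k\<in>confs (Y - S) d. cnj (graph_code d X Y G (join_conf S a' k) j')
                                 * graph_code d X Y G (join_conf S a k) j)
    = complex_of_real (1 / real d ^ card Y) * exp (\<i> * complex_of_real (pi / real d) *
        (of_nat (qform G (X \<union> S) (join_conf X j a)) - of_nat (qform G (X \<union> S) (join_conf X j' a'))))
      * (\<Prod>r\<in>Y - S. if [syndrome G (X \<union> S) (join_conf X j a) r
                           = syndrome G (X \<union> S) (join_conf X j' a') r] (mod d)
                      then of_nat d else 0)"
proof -
  define D where "D r = int (syndrome G (X \<union> S) (join_conf X j a) r)
                        - int (syndrome G (X \<union> S) (join_conf X j' a') r)" for r
  define root where "root r t = exp (2 * pi * \<i> * of_nat t * of_int (D r) / of_nat d)" for r t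
  have "(\<Sum>k\<in>confs (Y - S) d. cnj (graph_code d X Y G (join_conf S a' k) j')
                                 * graph_code d X Y G (join_conf S a k) j)
    = complex_of_real (1 / real d ^ card Y) * exp (\<i> * complex_of_real (pi / real d) *
        (of_nat (qform G (X \<union> S) (join_conf X j a)) - of_nat (qform G (X \<union> S) (join_conf X j' a'))))
      * (\<Sum>k\<in>confs (Y - S) d. \<Prod>r\<in>Y - S. root r (k r))"
    by (simp add: cnj_graph_code_mult[OF assms(2-6)] root_def D_def sum_distrib_left)
  also have "(\<Sum>k\<in>confs (Y - S) d. \<Prod>r\<in>Y - S. root r (k r)) = (\<Prod>r\<in>Y - S. \<Sum>t\<in>{0..<d}. root r t)"
    unfolding confs_def using assms(3) by (intro prod_sum_PiE[symmetric]) auto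
  also have "\<dots> = (\<Prod>r\<in>Y - S. if int d dvd D r then of_nat d else 0)"
    unfolding root_def using assms(1) by (simp only: sum_roots_of_unity_power)
  also have "\<dots> = (\<Prod>r\<in>Y - S. if [syndrome G (X \<union> S) (join_conf X j a) r
                           = syndrome G (X \<union> S) (join_conf X j' a') r] (mod d)
                      then of_nat d else 0)"
    by (simp add: D_def cong_int_iff flip: cong_iff_dvd_diff)
  finally show ?thesis .
qed

lemma eq_if_syndrome_cong:
  assumes "d > 0" and "finite T"
    and kernel: "\<forall>v\<in>confs T d. (\<forall>r\<in>R. d dvd syndrome G T v r) \<longrightarrow> (\<forall>t\<in>T. v t = 0)"
    and bounded: "\<forall>t\<in>T. w t < d \<and> w' t < d"
    and cong: "\<forall>r\<in>R. [syndrome G T w r = syndrome G T w' r] (mod d)"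
    and "t \<in> T"
  shows "w t = w' t"
proof -
  \<comment> \<open>\<open>w - w'\<close> mod \<open>d\<close>, written so that no truncated subtraction occurs\<close>
  define v where "v = restrict (\<lambda>t. (w t + (d - w' t)) mod d) T"
  have v_plus: "[v t + w' t = w t] (mod d)" if "t \<in> T" for t
  proof -
    have "w t < d" "w' t < d"
      using that bounded by auto
    then show ?thesis
      using that unfolding v_def cong_def by (simp add: mod_add_left_eq add.assoc)
  qed
  have "d dvd syndrome G T v r" if "r \<in> R" for r
  proof -
    have "syndrome G T v r + syndrome G T w' r = (\<Sum>t\<in>T. G r t * (v t + w' t))"
      by (simp add: syndrome_def distrib_left sum.distrib)
    also have "[\<dots> = syndrome G T w r] (mod d)"
      unfolding syndrome_def using v_plus by (intro cong_sum cong_mult) auto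
    also have "[syndrome G T w r = 0 + syndrome G T w' r] (mod d)"
      using cong that by simp
    finally show ?thesis
      by (simp add: cong_add_rcancel_0_nat cong_0_iff)
  qed
  moreover have "v \<in> confs T d"
    using assms(1) by (simp add: v_def confs_def)
  ultimately have "v t = 0"
    using kernel assms(6) by blast
  then show ?thesis
    using v_plus[OF assms(6)] bounded assms(6) by (auto dest: cong_less_modulus_unique_nat)
qed

lemma sum_cnj_graph_code_mult_detectable:
  assumes "d > 0" and "finite X" and "finite Y" and "X \<inter> Y = {}" and "S \<subseteq> Y"
    and "\<And>x y. G x y = G y x" and "detectable d X Y G S"
    and "j \<in> confs X d" and "j' \<in> confs X d" and "a \<in> confs S d" and "a' \<in> confs S d"
  shows "(\<Sum>k\<in>confs (Y - S) d. cnj (graph_code d X Y G (join_conf S a' k) j')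
                                 * graph_code d X Y G (join_conf S a k) j)
    = (if a' = a \<and> j' = j then of_nat d ^ card (Y - S) / of_nat d ^ card Y else 0)"
proof (cases "a' = a \<and> j' = j")
  case True
  then show ?thesis
    using assms(3) by (simp add: sum_cnj_graph_code_mult[OF assms(1-6)])
next
  case False
  let ?w = "join_conf X j a" and ?w' = "join_conf X j' a'"
  have "\<exists>r\<in>Y - S. \<not> [syndrome G (X \<union> S) ?w r = syndrome G (X \<union> S) ?w' r] (mod d)"
  proof (rule ccontr)
    assume "\<not> ?thesis"
    then have agree: "?w t = ?w' t" if "t \<in> X \<union> S" for t
      using assms(1-3,5,7-11) that finite_subset
      by (intro eq_if_syndrome_cong[where R = "Y - S"])
         (auto simp: detectable_def confs_def join_conf_def PiE_iff)
    have "j' x = j x" for x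
      using agree[of x] assms(8,9)
      by (cases "x \<in> X") (auto simp: confs_def join_conf_def PiE_iff extensional_def)
    moreover have "a' x = a x" for x
      using agree[of x] assms(4,5,10,11)
      by (cases "x \<in> S"; cases "x \<in> X") (auto simp: confs_def join_conf_def PiE_iff extensional_def)
    ultimately show False
      using False by auto
  qed
  then show ?thesis
    using False assms(1,3) by (simp add: sum_cnj_graph_code_mult[OF assms(1-6)] prod_zero_iff)
qed

section \<open>Errors compressed by the code\<close>

definition code_sandwich ::
    "nat \<Rightarrow> 'a set \<Rightarrow> 'a set \<Rightarrow> ('a \<Rightarrow> 'a \<Rightarrow> nat) \<Rightarrow> (('a \<Rightarrow> nat) \<Rightarrow> ('a \<Rightarrow> nat) \<Rightarrow> complex)
     \<Rightarrow> ('a \<Rightarrow> nat) \<Rightarrow> ('a \<Rightarrow> nat) \<Rightarrow> complex" where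
  "code_sandwich d X Y G M j' j = (\<Sum>y'\<in>confs Y d. \<Sum>y\<in>confs Y d.
      cnj (graph_code d X Y G y' j') * M y' y * graph_code d X Y G y j)"

definition scalar_on ::
    "'a set \<Rightarrow> nat \<Rightarrow> (('a \<Rightarrow> nat) \<Rightarrow> ('a \<Rightarrow> nat) \<Rightarrow> complex) \<Rightarrow> complex \<Rightarrow> bool" where
  "scalar_on X d L \<omega> \<longleftrightarrow> (\<forall>j'\<in>confs X d. \<forall>j\<in>confs X d. L j' j = (if j' = j then \<omega> else 0))"

lemma hinner_apply_code_eq_sum:
  "hinner Y d (apply_code d X Y G \<phi>\<^sub>1) (op_apply Y d M (apply_code d X Y G \<phi>\<^sub>2))
   = (\<Sum>j\<in>confs X d. \<Sum>j'\<in>confs X d. cnj (\<phi>\<^sub>1 j') * \<phi>\<^sub>2 j * code_sandwich d X Y G M j' j)"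
  unfolding hinner_def op_apply_def apply_code_def code_sandwich_def
  by (simp add: sum_distrib_left sum_distrib_right mult_ac
      sum.swap[where A = "confs Y d" and B = "confs X d"])

lemma hinner_apply_code_scalar:
  assumes "finite X" and "scalar_on X d (code_sandwich d X Y G M) \<omega>"
  shows "hinner Y d (apply_code d X Y G \<phi>\<^sub>1) (op_apply Y d M (apply_code d X Y G \<phi>\<^sub>2))
         = hinner X d \<phi>\<^sub>1 \<phi>\<^sub>2 * \<omega>"
proof -
  have "hinner Y d (apply_code d X Y G \<phi>\<^sub>1) (op_apply Y d M (apply_code d X Y G \<phi>\<^sub>2))
      = (\<Sum>j\<in>confs X d. \<Sum>j'\<in>confs X d. if j' = j then cnj (\<phi>\<^sub>1 j') * \<phi>\<^sub>2 j * \<omega> else 0)"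
    unfolding hinner_apply_code_eq_sum using assms(2)
    by (intro sum.cong refl) (auto simp: scalar_on_def)
  also have "\<dots> = hinner X d \<phi>\<^sub>1 \<phi>\<^sub>2 * \<omega>"
    using assms(1) by (simp add: hinner_def sum_distrib_right finite_confs sum.delta)
  finally show ?thesis .
qed

lemma code_sandwich_sum:
  assumes "finite I"
  shows "code_sandwich d X Y G (\<lambda>y' y. \<Sum>i\<in>I. c i * M i y' y) j' j
         = (\<Sum>i\<in>I. c i * code_sandwich d X Y G (M i) j' j)"
  unfolding code_sandwich_def
  by (simp add: sum_distrib_left sum_distrib_right mult_ac sum.swap[where B = I])

lemma scalar_on_sum:
  assumes "\<And>i. i \<in> I \<Longrightarrow> scalar_on X d (L i) (\<omega> i)"
  shows "scalar_on X d (\<lambda>j' j. \<Sum>i\<in>I. c i * L i j' j) (\<Sum>i\<in>I. c i * \<omega> i)"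
  using assms by (simp add: scalar_on_def)

lemma op_mult_adj_sum:
  "op_mult Y d (op_adj (\<lambda>j k. \<Sum>i\<in>I. c i * F i j k)) (\<lambda>j k. \<Sum>i'\<in>I'. c' i' * F' i' j k)
   = (\<lambda>y' y. \<Sum>p\<in>I \<times> I'.
        cnj (c (fst p)) * c' (snd p) * op_mult Y d (op_adj (F (fst p))) (F' (snd p)) y' y)"
proof (intro ext)
  fix y' y
  have "op_mult Y d (op_adj (\<lambda>j k. \<Sum>i\<in>I. c i * F i j k)) (\<lambda>j k. \<Sum>i'\<in>I'. c' i' * F' i' j k) y' y
      = (\<Sum>l\<in>confs Y d. \<Sum>i\<in>I. \<Sum>i'\<in>I'. cnj (c i) * c' i' * (cnj (F i l y') * F' i' l y))"
    unfolding op_mult_def op_adj_def by (simp add: sum_distrib_left sum_distrib_right mult_ac)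
  also have "\<dots> = (\<Sum>i\<in>I. \<Sum>i'\<in>I'. cnj (c i) * c' i' * op_mult Y d (op_adj (F i)) (F' i') y' y)"
    unfolding op_mult_def op_adj_def
    by (simp add: sum_distrib_left sum.swap[where A = "confs Y d" and B = I]
        sum.swap[where A = "confs Y d" and B = I'])
  finally show "op_mult Y d (op_adj (\<lambda>j k. \<Sum>i\<in>I. c i * F i j k))
      (\<lambda>j k. \<Sum>i'\<in>I'. c' i' * F' i' j k) y' y
    = (\<Sum>p\<in>I \<times> I'.
        cnj (c (fst p)) * c' (snd p) * op_mult Y d (op_adj (F (fst p))) (F' (snd p)) y' y)"
    by (simp add: sum.cartesian_product split_def)
qed

definition site_adj_mult ::
    "nat \<Rightarrow> ('a \<Rightarrow> nat \<Rightarrow> nat \<Rightarrow> complex) \<Rightarrow> ('a \<Rightarrow> nat \<Rightarrow> nat \<Rightarrow> complex) \<Rightarrow> 'a \<Rightarrow> nat \<Rightarrow> nat \<Rightarrow> complex"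
  where "site_adj_mult d A B s p q = (\<Sum>t\<in>{0..<d}. cnj (A s t p) * B s t q)"

lemma op_mult_adj_tensor_op:
  assumes "finite Y"
  shows "op_mult Y d (op_adj (tensor_op Y A)) (tensor_op Y B) = tensor_op Y (site_adj_mult d A B)"
proof (intro ext)
  fix y' y
  have "op_mult Y d (op_adj (tensor_op Y A)) (tensor_op Y B) y' y
      = (\<Sum>l\<in>confs Y d. \<Prod>s\<in>Y. cnj (A s (l s) (y' s)) * B s (l s) (y s))"
    unfolding op_mult_def op_adj_def tensor_op_def by (simp add: prod.distrib)
  also have "\<dots> = (\<Prod>s\<in>Y. \<Sum>t\<in>{0..<d}. cnj (A s t (y' s)) * B s t (y s))"
    unfolding confs_def using assms
    by (intro prod_sum_PiE[where f = "\<lambda>s t. cnj (A s t (y' s)) * B s t (y s)", symmetric]) auto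
  finally show "op_mult Y d (op_adj (tensor_op Y A)) (tensor_op Y B) y' y
      = tensor_op Y (site_adj_mult d A B) y' y"
    unfolding tensor_op_def site_adj_mult_def .
qed

lemma site_adj_mult_identity:
  assumes "\<not> non_identity d (A s)" and "\<not> non_identity d (B s)" and "p < d" and "q < d"
  shows "site_adj_mult d A B s p q = (if p = q then 1 else 0)"
proof -
  have "site_adj_mult d A B s p q = (\<Sum>t\<in>{0..<d}. if t = p then (if t = q then 1 else 0) else 0)"
    unfolding site_adj_mult_def using assms unfolding non_identity_def by (intro sum.cong refl) auto
  also have "\<dots> = (if p = q then 1 else 0)"
    using assms by (simp add: sum.delta')
  finally show ?thesis .
qed

lemma tensor_op_join_conf:
  assumes "finite Y" and "S \<subseteq> Y"
    and identity: "\<forall>s\<in>Y - S. \<forall>p<d. \<forall>q<d. C s p q = (if p = q then 1 else 0)"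
    and "k \<in> confs (Y - S) d" and "k' \<in> confs (Y - S) d"
  shows "tensor_op Y C (join_conf S a' k') (join_conf S a k)
         = (if k = k' then \<Prod>s\<in>S. C s (a' s) (a s) else 0)"
proof -
  have same_k: "k' = k \<longleftrightarrow> (\<forall>s\<in>Y - S. k' s = k s)"
    using assms(4,5) by (auto simp: confs_def intro: PiE_ext)
  have "tensor_op Y C (join_conf S a' k') (join_conf S a k)
      = (\<Prod>s\<in>Y - S. C s (k' s) (k s)) * (\<Prod>s\<in>S. C s (a' s) (a s))"
    unfolding tensor_op_def prod.subset_diff[OF assms(2,1)]
    by (intro arg_cong2[where f = "(*)"] prod.cong) (auto simp: join_conf_def)
  also have "(\<Prod>s\<in>Y - S. C s (k' s) (k s)) = (\<Prod>s\<in>Y - S. if k' s = k s then 1 else 0)"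
    using identity assms(4,5) by (intro prod.cong refl) (auto simp: confs_def PiE_iff)
  also have "\<dots> = (if k' = k then 1 else 0)"
    using assms(1) same_k by (auto simp: prod_zero_iff)
  finally show ?thesis
    by auto
qed

lemma scalar_code_sandwich_tensor_op:
  assumes "d > 0" and "finite X" and "finite Y" and "X \<inter> Y = {}" and "S \<subseteq> Y"
    and "\<And>x y. G x y = G y x" and "detectable d X Y G S"
    and identity: "\<forall>s\<in>Y - S. \<forall>p<d. \<forall>q<d. C s p q = (if p = q then 1 else 0)"
  shows "scalar_on X d (code_sandwich d X Y G (tensor_op Y C))
           ((\<Sum>a\<in>confs S d. \<Prod>s\<in>S. C s (a s) (a s)) * of_nat d ^ card (Y - S) / of_nat d ^ card Y)"
  unfolding scalar_on_def
proof (intro ballI)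
  fix j' j assume j': "j' \<in> confs X d" and j: "j \<in> confs X d"
  define V where "V = graph_code d X Y G"
  define P where "P a' a = (\<Prod>s\<in>S. C s (a' s) (a s))" for a' a :: "'a \<Rightarrow> nat"
  define K :: complex where "K = of_nat d ^ card (Y - S) / of_nat d ^ card Y"
  have fin: "finite (confs S d)" "finite (confs (Y - S) d)"
    using assms(3,5) by (auto intro: finite_confs finite_subset)
  have "code_sandwich d X Y G (tensor_op Y C) j' j
      = (\<Sum>a'\<in>confs S d. \<Sum>k'\<in>confs (Y - S) d. \<Sum>a\<in>confs S d. \<Sum>k\<in>confs (Y - S) d.
           cnj (V (join_conf S a' k') j') * tensor_op Y C (join_conf S a' k') (join_conf S a k)
           * V (join_conf S a k) j)"
    unfolding code_sandwich_def V_def by (simp only: sum_confs_split[OF assms(5)])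
  also have "\<dots> = (\<Sum>a'\<in>confs S d. \<Sum>k'\<in>confs (Y - S) d. \<Sum>a\<in>confs S d. \<Sum>k\<in>confs (Y - S) d.
           if k = k' then P a' a * (cnj (V (join_conf S a' k') j') * V (join_conf S a k') j)
           else 0)"
    using assms(3,5) identity by (intro sum.cong refl) (auto simp: tensor_op_join_conf P_def)
  also have "\<dots> = (\<Sum>a'\<in>confs S d. \<Sum>k'\<in>confs (Y - S) d. \<Sum>a\<in>confs S d.
           P a' a * (cnj (V (join_conf S a' k') j') * V (join_conf S a k') j))"
    using fin by (simp add: sum.delta)
  also have "\<dots> = (\<Sum>a'\<in>confs S d. \<Sum>a\<in>confs S d.
           P a' a * (\<Sum>k\<in>confs (Y - S) d. cnj (V (join_conf S a' k) j') * V (join_conf S a k) j))"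
    by (simp add: sum_distrib_left sum.swap[where A = "confs (Y - S) d" and B = "confs S d"])
  also have "\<dots> = (\<Sum>a'\<in>confs S d. \<Sum>a\<in>confs S d. if a' = a \<and> j' = j then P a a * K else 0)"
    using sum_cnj_graph_code_mult_detectable[OF assms(1-7) j j']
    by (intro sum.cong refl) (simp add: V_def K_def)
  also have "\<dots> = (if j' = j then (\<Sum>a\<in>confs S d. P a a) * K else 0)"
    using fin by (simp add: sum.delta sum_distrib_right)
  finally show "code_sandwich d X Y G (tensor_op Y C) j' j
      = (if j' = j
         then (\<Sum>a\<in>confs S d. \<Prod>s\<in>S. C s (a s) (a s)) * of_nat d ^ card (Y - S) / of_nat d ^ card Y
         else 0)"
    by (simp add: P_def K_def)
qed

lemma scalar_code_sandwich_error_pair: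
  assumes "d > 0" and "finite X" and "finite Y" and "X \<inter> Y = {}" and "\<And>x y. G x y = G y x"
    and "2 * f \<le> card Y" and "\<forall>S\<subseteq>Y. card S = 2 * f \<longrightarrow> detectable d X Y G S"
    and "card {y\<in>Y. non_identity d (A y)} \<le> f" and "card {y\<in>Y. non_identity d (B y)} \<le> f"
  shows "\<exists>\<omega>. scalar_on X d
           (code_sandwich d X Y G (op_mult Y d (op_adj (tensor_op Y A)) (tensor_op Y B))) \<omega>"
proof -
  define support where "support = {y\<in>Y. non_identity d (A y)} \<union> {y\<in>Y. non_identity d (B y)}"
  have "card support \<le> 2 * f"
    unfolding support_def using assms(8,9) by (intro order_trans[OF card_Un_le]) simp
  moreover have "support \<subseteq> Y"
    by (auto simp: support_def)
  ultimately obtain S where S: "support \<subseteq> S" "S \<subseteq> Y" "card S = 2 * f"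
    using exists_subset_between[OF _ assms(6) _ assms(3)] by blast
  have "\<forall>s\<in>Y - S. \<forall>p<d. \<forall>q<d. site_adj_mult d A B s p q = (if p = q then 1 else 0)"
    using S(1) by (intro ballI allI impI site_adj_mult_identity) (auto simp: support_def)
  moreover have "detectable d X Y G S"
    using assms(7) S(2,3) by blast
  \<comment> \<open>without \<open>where G = G\<close> the symmetry premise unifies with a twisted \<open>\<lambda>x y. G (h x y) (h y x)\<close>\<close>
  ultimately show ?thesis
    unfolding op_mult_adj_tensor_op[OF assms(3)]
    using scalar_code_sandwich_tensor_op[where G = G, OF assms(1-4) S(2) assms(5)] by blast
qed

lemma corrects_if_detectable:
  assumes "d > 0" and "finite X" and "finite Y" and "X \<inter> Y = {}" and "\<And>x y. G x y = G y x"
    and "2 * f \<le> card Y" and "\<forall>S\<subseteq>Y. card S = 2 * f \<longrightarrow> detectable d X Y G S"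
  shows "corrects d X Y G f"
  unfolding corrects_def
proof (intro ballI)
  fix F\<^sub>1 F\<^sub>2 assume "F\<^sub>1 \<in> error_space d Y f" "F\<^sub>2 \<in> error_space d Y f"
  obtain N\<^sub>1 :: nat and c\<^sub>1 A\<^sub>1 where
      A\<^sub>1: "\<forall>i<N\<^sub>1. card {y\<in>Y. non_identity d (A\<^sub>1 i y)} \<le> f"
    and F\<^sub>1: "F\<^sub>1 = (\<lambda>j k. \<Sum>i<N\<^sub>1. c\<^sub>1 i * tensor_op Y (A\<^sub>1 i) j k)"
    using \<open>F\<^sub>1 \<in> error_space d Y f\<close> unfolding error_space_def by blast
  obtain N\<^sub>2 :: nat and c\<^sub>2 A\<^sub>2 where
      A\<^sub>2: "\<forall>i<N\<^sub>2. card {y\<in>Y. non_identity d (A\<^sub>2 i y)} \<le> f"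
    and F\<^sub>2: "F\<^sub>2 = (\<lambda>j k. \<Sum>i<N\<^sub>2. c\<^sub>2 i * tensor_op Y (A\<^sub>2 i) j k)"
    using \<open>F\<^sub>2 \<in> error_space d Y f\<close> unfolding error_space_def by blast
  define I where "I = {..<N\<^sub>1} \<times> {..<N\<^sub>2}"
  define E where
    "E p = op_mult Y d (op_adj (tensor_op Y (A\<^sub>1 (fst p)))) (tensor_op Y (A\<^sub>2 (snd p)))" for p
  have "\<forall>p\<in>I. \<exists>\<omega>. scalar_on X d (code_sandwich d X Y G (E p)) \<omega>"
    using A\<^sub>1 A\<^sub>2 unfolding I_def E_def by (auto intro!: scalar_code_sandwich_error_pair[OF assms])
  then obtain \<omega> where \<omega>: "\<And>p. p \<in> I \<Longrightarrow> scalar_on X d (code_sandwich d X Y G (E p)) (\<omega> p)"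
    by metis
  have "code_sandwich d X Y G (op_mult Y d (op_adj F\<^sub>1) F\<^sub>2)
      = (\<lambda>j' j. \<Sum>p\<in>I. cnj (c\<^sub>1 (fst p)) * c\<^sub>2 (snd p) * code_sandwich d X Y G (E p) j' j)"
    unfolding F\<^sub>1 F\<^sub>2 op_mult_adj_sum E_def I_def by (intro ext code_sandwich_sum) simp
  then have "scalar_on X d (code_sandwich d X Y G (op_mult Y d (op_adj F\<^sub>1) F\<^sub>2))
      (\<Sum>p\<in>I. cnj (c\<^sub>1 (fst p)) * c\<^sub>2 (snd p) * \<omega> p)"
    using \<omega> by (simp add: scalar_on_sum)
  then show "\<exists>\<omega>. \<forall>\<phi>\<^sub>1 \<phi>\<^sub>2. hinner Y d (apply_code d X Y G \<phi>\<^sub>1)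
      (op_apply Y d (op_mult Y d (op_adj F\<^sub>1) F\<^sub>2) (apply_code d X Y G \<phi>\<^sub>2)) = hinner X d \<phi>\<^sub>1 \<phi>\<^sub>2 * \<omega>"
    using hinner_apply_code_scalar[OF assms(2)] by blast
qed

section \<open>The failure probability\<close>

lemma prob_not_corrects_le:
  assumes "prime d" and "finite X" and "finite Y" and "X \<inter> Y = {}" and "2 * f \<le> card Y"
  shows "measure_pmf.prob (pmf_of_set (adj_mats d (X \<union> Y))) {G. \<not> corrects d X Y G f}
         \<le> real (card Y choose (2 * f)) * real d ^ (card X + 2 * f) / real d ^ (card Y - 2 * f)"
proof -
  define A where "A = adj_mats d (X \<union> Y)"
  define bad where "bad = {G \<in> A. \<exists>S\<subseteq>Y. card S = 2 * f \<and> \<not> detectable d X Y G S}"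
  have d: "d > 0"
    using prime_gt_0_nat[OF assms(1)] .
  then have "(\<lambda>k l. 0) \<in> A"
    by (simp add: A_def adj_mats_def)
  then have A: "finite A" "A \<noteq> {}"
    using assms by (auto simp: A_def finite_adj_mats)
  have "G \<in> bad" if "G \<in> A" and "\<not> corrects d X Y G f" for G
  proof -
    have symmetric: "G x y = G y x" for x y
      using \<open>G \<in> A\<close> by (simp add: A_def adj_mats_def)
    show ?thesis
      using that corrects_if_detectable[where G = G, OF d assms(2-4) symmetric assms(5)]
      by (auto simp: bad_def)
  qed
  then have "A \<inter> {G. \<not> corrects d X Y G f} \<subseteq> bad"
    by blast
  then have "real (card (A \<inter> {G. \<not> corrects d X Y G f})) * real d ^ (card Y - 2 * f)
      \<le> real (card bad) * real d ^ (card Y - 2 * f)"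
    using A(1) by (intro mult_right_mono of_nat_mono card_mono) (auto simp: bad_def)
  also have "\<dots> \<le> real (card Y choose (2 * f)) * real d ^ (card X + 2 * f) * real (card A)"
    using card_some_not_detectable_le[OF assms(1-4), of "2 * f"] unfolding bad_def A_def
    by (simp flip: of_nat_mult of_nat_power)
  finally show ?thesis
    unfolding A_def[symmetric] using A d
    by (simp add: measure_pmf_of_set field_simps card_gt_0_iff)
qed

theorem proposition3:
  fixes d m n f :: nat and X Y :: "'a set"
  assumes "prime d" and "2 * f < n"
    and "finite X" and "finite Y" and "X \<inter> Y = {}"
    and "card X = m" and "card Y = n"
  defines "P \<equiv> measure_pmf.prob (pmf_of_set (adj_mats d (X \<union> Y)))
                 {G. \<not> corrects d X Y G f}"
  shows "P = 0 \<or>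
    1 / real n * log 2 P \<le>
      (real m / real n + 4 * real f / real n - 1) * log 2 (real d) + H2 (2 * real f / real n)"
proof (cases "P = 0")
  case False
  then have "P > 0"
    unfolding P_def by (simp add: zero_less_measure_iff)
  moreover have "P \<le> real (n choose (2 * f)) * real d ^ (m + 2 * f) / real d ^ (n - 2 * f)"
    unfolding P_def using prob_not_corrects_le[OF assms(1,3-5), of f] assms(2,6,7) by simp
  ultimately have "log 2 P / real n \<le> (real m / real n + 2 * real (2 * f) / real n - 1) * log 2 (real d)
      + H2 (real (2 * f) / real n)"
    using assms(2) prime_gt_1_nat[OF assms(1)] by (intro log_le_binomial_bound) auto
  then show ?thesis
    by simp
qed simp

end
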